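(* Let $A$ be a ring for which every element is a sum of units. Then $A$ is the only factroid of $A$ that contains a left-regular element. Thus, if $A$ is moreover an integral domain, then the only factroids of $A$ are $\{0\}$ and $A$.
   Context: Rings are unital, not necessarily commutative. $\mathrm{reg}(A)$ denotes the set of left-regular elements (left nonzerodivisors) of $A$. A factroid of $A$ is an additive subgroup $F$ of $A$ such that for all $a\in A$ and $b\in\mathrm{reg}(A)$, $ba\in F$ implies $a\in F$. *)

theory Defs
  imports Main
begin

definition is_unit :: "'a::ring_1 \<Rightarrow> bool" where
  "is_unit u \<longleftrightarrow> (\<exists>v. u * v = 1 \<and> v * u = 1)"

definition sum_of_units :: "'a::ring_1 \<Rightarrow> bool" where
  "sum_of_units x \<longleftrightarrow> (\<exists>us. (\<forall>u\<in>set us. is_unit u) \<and> x = sum_list us)"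

definition reg :: "'a::ring_1 set" where
  "reg = {b. \<forall>a. b * a = 0 \<longrightarrow> a = 0}"

definition additive_subgroup :: "'a::ring_1 set \<Rightarrow> bool" where
  "additive_subgroup F \<longleftrightarrow> 0 \<in> F \<and> (\<forall>x\<in>F. \<forall>y\<in>F. x + y \<in> F) \<and> (\<forall>x\<in>F. - x \<in> F)"

definition factroid :: "'a::ring_1 set \<Rightarrow> bool" where
  "factroid F \<longleftrightarrow> additive_subgroup F \<and> (\<forall>a. \<forall>b\<in>reg. b * a \<in> F \<longrightarrow> a \<in> F)"

definition integral_domain :: "'a::ring_1 itself \<Rightarrow> bool" where
  "integral_domain _ \<longleftrightarrow> (\<forall>x y::'a. x * y = y * x) \<and> (0::'a) \<noteq> 1 \<and>
     (\<forall>x y::'a. x * y = 0 \<longrightarrow> x = 0 \<or> y = 0)"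

end

theory Submission
  imports Defs
begin

text \<open>A factroid F containing a left-regular element b contains every unit u: with v the
inverse of u, the element b v is again left-regular and (b v) u = b lies in F. Being an
additive subgroup, F then contains all sums of units, which is everything. In an integral
domain every nonzero element is regular, so a factroid other than {0} is everything.\<close>

lemma additive_subgroup_zero: "additive_subgroup F \<Longrightarrow> 0 \<in> F"
  unfolding additive_subgroup_def by simp

lemma additive_subgroup_sum_list:
  assumes "additive_subgroup F" and "set us \<subseteq> F"
  shows "sum_list us \<in> F"
  using assms(2)
proof (induction us)
  case Nil
  show ?case using additive_subgroup_zero[OF assms(1)] by simp
next
  case (Cons u us)
  then show ?case using assms(1) unfolding additive_subgroup_def by simp
qed

lemma reg_mult:
  assumes "b \<in> reg" and "c \<in> reg"
  shows "b * c \<in> reg"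
  unfolding reg_def
proof (intro CollectI allI impI)
  fix a assume "b * c * a = 0"
  then have "c * a = 0" using \<open>b \<in> reg\<close> unfolding reg_def by (simp add: mult.assoc)
  then show "a = 0" using \<open>c \<in> reg\<close> unfolding reg_def by simp
qed

lemma is_unit_in_reg:
  assumes "is_unit u"
  shows "u \<in> reg"
  unfolding reg_def
proof (intro CollectI allI impI)
  obtain v where "v * u = 1" using assms unfolding is_unit_def by blast
  fix a assume "u * a = 0"
  then have "v * u * a = 0" by (simp add: mult.assoc)
  with \<open>v * u = 1\<close> show "a = 0" by simp
qed

lemma factroid_is_unit:
  assumes "factroid F" and "b \<in> F" "b \<in> reg" and "is_unit u"
  shows "u \<in> F"
proof -
  obtain v where uv: "u * v = 1" "v * u = 1" using \<open>is_unit u\<close> unfolding is_unit_def by blast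
  then have "is_unit v" unfolding is_unit_def by blast
  then have "b * v \<in> reg" using \<open>b \<in> reg\<close> by (simp add: reg_mult is_unit_in_reg)
  moreover have "b * v * u \<in> F" using \<open>b \<in> F\<close> by (simp add: mult.assoc uv)
  ultimately show ?thesis using \<open>factroid F\<close> unfolding factroid_def by blast
qed

lemma factroid_eq_UNIV_if_reg:
  assumes units: "\<forall>x::'a::ring_1. sum_of_units x"
    and "factroid (F::'a set)" and "b \<in> F" "b \<in> reg"
  shows "F = UNIV"
proof -
  have "x \<in> F" for x :: 'a
  proof -
    obtain us where us: "\<forall>u\<in>set us. is_unit u" "x = sum_list us"
      using units unfolding sum_of_units_def by blast
    have "set us \<subseteq> F" using us(1) factroid_is_unit[OF assms(2-4)] by blast
    with \<open>factroid F\<close> show ?thesis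
      unfolding us(2) factroid_def by (blast intro: additive_subgroup_sum_list)
  qed
  then show ?thesis by blast
qed

lemma integral_domain_nonzero_in_reg:
  "integral_domain TYPE('a::ring_1) \<Longrightarrow> (x::'a) \<noteq> 0 \<Longrightarrow> x \<in> reg"
  unfolding integral_domain_def reg_def by blast

theorem theorem4p12:
  assumes "\<forall>x::'a::ring_1. sum_of_units x"
  shows "(\<forall>F::'a set. factroid F \<and> F \<inter> reg \<noteq> {} \<longrightarrow> F = UNIV)
    \<and> (integral_domain TYPE('a) \<longrightarrow> (\<forall>F::'a set. factroid F \<longrightarrow> F = {0} \<or> F = UNIV))"
proof (intro conjI allI impI)
  fix F :: "'a set"
  assume "factroid F \<and> F \<inter> reg \<noteq> {}"
  then show "F = UNIV" using factroid_eq_UNIV_if_reg[OF assms] by blast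
next
  fix F :: "'a set"
  assume dom: "integral_domain TYPE('a)" and "factroid F"
  show "F = {0} \<or> F = UNIV"
  proof (cases "F \<subseteq> {0}")
    case True
    then show ?thesis
      using \<open>factroid F\<close> additive_subgroup_zero unfolding factroid_def by blast
  next
    case False
    then obtain x where "x \<in> F" "x \<noteq> 0" by blast
    then show ?thesis
      using factroid_eq_UNIV_if_reg[OF assms \<open>factroid F\<close>]
        integral_domain_nonzero_in_reg[OF dom] by blast
  qed
qed

end
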